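(* Let $(b,c)$ be a locally finite, connected graph over a countable set $X$ on which $\mathbb{Z}^d$ acts freely and cocompactly with fundamental domain $V$ (so every $x\in X$ is uniquely $x=zv$, $z\in\mathbb{Z}^d$, $v\in V$), such that $H_{b,c}$ is $\mathbb{Z}^d$-invariant; fix $x_0\in X$. For $\alpha\in\mathbb{R}^d$ let $Q_\alpha$ be the $V\times V$ matrix with $(Q_\alpha)_{v,w}=\sum_{z\in\mathbb{Z}^d}b(v,zw)e^{\langle\alpha,z\rangle}$ for $v\neq w$ and $(Q_\alpha)_{v,v}=\sum_{z\in\mathbb{Z}^d}b(v,zv)e^{\langle\alpha,z\rangle}+\max_{w\in V}\deg(w)-\deg(v)$; it is nonnegative and irreducible, with Perron–Frobenius eigenvalue $\theta(\alpha)$ and positive Perron–Frobenius eigenvector $\varphi_\alpha$. Then the map $\rho:\mathcal{M}_\mathbb{R}\to\mathbb{R}^d$ is bijective, with inverse $\rho^{-1}(\alpha)(zv)=e^{\langle\alpha,z\rangle}\varphi_\alpha(v)$ ($z\in\mathbb{Z}^d$, $v\in V$), where $\varphi_\alpha$ is normalised so that this function equals $1$ at $x_0$. Moreover, $\rho^{-1}(\alpha)\in\mathcal{M}_\lambda$ with $\lambda=\max_{v\in V}\deg(v)-\theta(\alpha)$.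
   Context: A graph over $X$ is $(b,c)$ with $b:X\times X\to[0,\infty)$, $c:X\to\mathbb{R}$, $\sum_yb(x,y)<\infty$ ($b$ need not be symmetric); locally finite and connected as usual ($x\sim y$ iff $b(x,y)>0$). $\deg(x)=\sum_yb(x,y)+c(x)$. $H_{b,c}f(x)=\sum_yb(x,y)(f(x)-f(y))+c(x)f(x)$ on $\mathrm{Dom}(H)=\{f:\sum_yb(x,y)|f(y)|<\infty\ \forall x\}$; $f$ is $\lambda$-harmonic if $(H-\lambda)f=0$. $T_gf(x)=f(g^{-1}x)$; $H$ is $\mathbb{Z}^d$-invariant if $T_g$ preserves $\mathrm{Dom}(H)$ and $HT_g=T_gH$. $f$ is multiplicative with character $\gamma_f$ if $\gamma_f:\mathbb{Z}^d\to(0,\infty)$ is a homomorphism with $f(zx)=\gamma_f(z)f(x)$. $\mathcal{K}_\lambda$ is the pointwise closure of $\{f\ge0,\ f\not\equiv0,\ \lambda\text{-harmonic},\ f(x_0)=1\}$, $\mathcal{M}_\lambda$ its multiplicative elements, $\mathcal{M}_\mathbb{R}=\bigcup_\lambda\mathcal{M}_\lambda$. $\rho(f)$ is the vector $\alpha\in\mathbb{R}^d$ with $\log\gamma_f(z)=\langle\alpha,z\rangle$ for all $z\in\mathbb{Z}^d$. *)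

theory Defs
  imports "HOL-Analysis.Analysis"
begin

definition zr :: "int ^ 'd \<Rightarrow> real ^ 'd" where
  "zr z = (\<chi> i. real_of_int (z $ i))"

definition is_action :: "(int ^ 'd \<Rightarrow> 'x \<Rightarrow> 'x) \<Rightarrow> bool" where
  "is_action act \<longleftrightarrow> (\<forall>x. act 0 x = x) \<and> (\<forall>z w x. act (z + w) x = act z (act w x))"

definition free_action :: "(int ^ 'd \<Rightarrow> 'x \<Rightarrow> 'x) \<Rightarrow> bool" where
  "free_action act \<longleftrightarrow> (\<forall>z x. act z x = x \<longrightarrow> z = 0)"

definition fundamental_domain :: "(int ^ 'd \<Rightarrow> 'x \<Rightarrow> 'x) \<Rightarrow> 'x set \<Rightarrow> bool" where
  "fundamental_domain act V \<longleftrightarrow>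
     (\<forall>x. \<exists>!p. snd p \<in> V \<and> x = act (fst p) (snd p))"

definition coord :: "(int ^ 'd \<Rightarrow> 'x \<Rightarrow> 'x) \<Rightarrow> 'x set \<Rightarrow> 'x \<Rightarrow> (int ^ 'd) \<times> 'x" where
  "coord act V x = (THE p. snd p \<in> V \<and> x = act (fst p) (snd p))"

definition is_graph :: "('x \<Rightarrow> 'x \<Rightarrow> real) \<Rightarrow> bool" where
  "is_graph b \<longleftrightarrow> (\<forall>x y. b x y \<ge> 0) \<and> (\<forall>x. (b x) summable_on UNIV)"

definition locally_finite :: "('x \<Rightarrow> 'x \<Rightarrow> real) \<Rightarrow> bool" where
  "locally_finite b \<longleftrightarrow> (\<forall>x. finite {y. b x y > 0})"

definition connected_graph :: "('x \<Rightarrow> 'x \<Rightarrow> real) \<Rightarrow> bool" where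
  "connected_graph b \<longleftrightarrow> (\<forall>x y. (\<lambda>u w. b u w > 0)\<^sup>*\<^sup>* x y)"

definition deg :: "('x \<Rightarrow> 'x \<Rightarrow> real) \<Rightarrow> ('x \<Rightarrow> real) \<Rightarrow> 'x \<Rightarrow> real" where
  "deg b c x = (\<Sum>\<^sub>\<infinity>y. b x y) + c x"

definition DomH :: "('x \<Rightarrow> 'x \<Rightarrow> real) \<Rightarrow> ('x \<Rightarrow> real) set" where
  "DomH b = {f. \<forall>x. (\<lambda>y. b x y * \<bar>f y\<bar>) summable_on UNIV}"

definition Hop :: "('x \<Rightarrow> 'x \<Rightarrow> real) \<Rightarrow> ('x \<Rightarrow> real) \<Rightarrow> ('x \<Rightarrow> real) \<Rightarrow> 'x \<Rightarrow> real" where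
  "Hop b c f x = (\<Sum>\<^sub>\<infinity>y. b x y * (f x - f y)) + c x * f x"

definition Tg :: "(int ^ 'd \<Rightarrow> 'x \<Rightarrow> 'x) \<Rightarrow> int ^ 'd \<Rightarrow> ('x \<Rightarrow> real) \<Rightarrow> 'x \<Rightarrow> real" where
  "Tg act g f x = f (act (- g) x)"

definition H_invariant :: "('x \<Rightarrow> 'x \<Rightarrow> real) \<Rightarrow> ('x \<Rightarrow> real) \<Rightarrow> (int ^ 'd \<Rightarrow> 'x \<Rightarrow> 'x) \<Rightarrow> bool" where
  "H_invariant b c act \<longleftrightarrow>
     (\<forall>g. \<forall>f \<in> DomH b. Tg act g f \<in> DomH b \<and> Hop b c (Tg act g f) = Tg act g (Hop b c f))"

definition harmonic :: "('x \<Rightarrow> 'x \<Rightarrow> real) \<Rightarrow> ('x \<Rightarrow> real) \<Rightarrow> real \<Rightarrow> ('x \<Rightarrow> real) \<Rightarrow> bool" where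
  "harmonic b c lam f \<longleftrightarrow> f \<in> DomH b \<and> (\<forall>x. Hop b c f x - lam * f x = 0)"

text \<open>K_lambda: closure in the topology of pointwise convergence (product topology).\<close>
definition Kset :: "('x \<Rightarrow> 'x \<Rightarrow> real) \<Rightarrow> ('x \<Rightarrow> real) \<Rightarrow> 'x \<Rightarrow> real \<Rightarrow> ('x \<Rightarrow> real) set" where
  "Kset b c x0 lam = closure {f. (\<forall>x. f x \<ge> 0) \<and> f \<noteq> (\<lambda>_. 0) \<and> harmonic b c lam f \<and> f x0 = 1}"

definition is_character :: "(int ^ 'd \<Rightarrow> 'x \<Rightarrow> 'x) \<Rightarrow> ('x \<Rightarrow> real) \<Rightarrow> (int ^ 'd \<Rightarrow> real) \<Rightarrow> bool" where
  "is_character act f \<gamma> \<longleftrightarrow> (\<forall>z. \<gamma> z > 0) \<and> (\<forall>z w. \<gamma> (z + w) = \<gamma> z * \<gamma> w)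
      \<and> (\<forall>z x. f (act z x) = \<gamma> z * f x)"

definition multiplicative :: "(int ^ 'd \<Rightarrow> 'x \<Rightarrow> 'x) \<Rightarrow> ('x \<Rightarrow> real) \<Rightarrow> bool" where
  "multiplicative act f \<longleftrightarrow> (\<exists>\<gamma>. is_character act f \<gamma>)"

definition character :: "(int ^ 'd \<Rightarrow> 'x \<Rightarrow> 'x) \<Rightarrow> ('x \<Rightarrow> real) \<Rightarrow> int ^ 'd \<Rightarrow> real" where
  "character act f = (THE \<gamma>. is_character act f \<gamma>)"

definition Mset :: "('x \<Rightarrow> 'x \<Rightarrow> real) \<Rightarrow> ('x \<Rightarrow> real) \<Rightarrow> (int ^ 'd \<Rightarrow> 'x \<Rightarrow> 'x) \<Rightarrow> 'x \<Rightarrow> real \<Rightarrow> ('x \<Rightarrow> real) set" where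
  "Mset b c act x0 lam = {f \<in> Kset b c x0 lam. multiplicative act f}"

definition MR :: "('x \<Rightarrow> 'x \<Rightarrow> real) \<Rightarrow> ('x \<Rightarrow> real) \<Rightarrow> (int ^ 'd \<Rightarrow> 'x \<Rightarrow> 'x) \<Rightarrow> 'x \<Rightarrow> ('x \<Rightarrow> real) set" where
  "MR b c act x0 = (\<Union>lam. Mset b c act x0 lam)"

definition rho :: "(int ^ 'd \<Rightarrow> 'x \<Rightarrow> 'x) \<Rightarrow> ('x \<Rightarrow> real) \<Rightarrow> real ^ 'd" where
  "rho act f = (THE \<alpha>. \<forall>z. ln (character act f z) = \<alpha> \<bullet> zr z)"

definition Qmat :: "('x \<Rightarrow> 'x \<Rightarrow> real) \<Rightarrow> ('x \<Rightarrow> real) \<Rightarrow> (int ^ 'd \<Rightarrow> 'x \<Rightarrow> 'x) \<Rightarrow> 'x set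
                     \<Rightarrow> real ^ 'd \<Rightarrow> 'x \<Rightarrow> 'x \<Rightarrow> real" where
  "Qmat b c act V \<alpha> v w =
     (if v = w then (\<Sum>\<^sub>\<infinity>z. b v (act z v) * exp (\<alpha> \<bullet> zr z)) + Max (deg b c ` V) - deg b c v
      else (\<Sum>\<^sub>\<infinity>z. b v (act z w) * exp (\<alpha> \<bullet> zr z)))"

definition eigenvalues_on :: "'x set \<Rightarrow> ('x \<Rightarrow> 'x \<Rightarrow> real) \<Rightarrow> complex set" where
  "eigenvalues_on V Q = {\<mu>. \<exists>u :: 'x \<Rightarrow> complex. (\<exists>v\<in>V. u v \<noteq> 0) \<and>
        (\<forall>v\<in>V. (\<Sum>w\<in>V. complex_of_real (Q v w) * u w) = \<mu> * u v)}"

text \<open>The Perron-Frobenius eigenvalue of a nonnegative irreducible matrix is its spectral radius.\<close>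
definition PF_eigenvalue :: "'x set \<Rightarrow> ('x \<Rightarrow> 'x \<Rightarrow> real) \<Rightarrow> real" where
  "PF_eigenvalue V Q = Max (cmod ` eigenvalues_on V Q)"

definition PF_eigenvector :: "'x set \<Rightarrow> ('x \<Rightarrow> 'x \<Rightarrow> real) \<Rightarrow> ('x \<Rightarrow> real) \<Rightarrow> bool" where
  "PF_eigenvector V Q \<phi> \<longleftrightarrow> (\<forall>v\<in>V. \<phi> v > 0) \<and>
      (\<forall>v\<in>V. (\<Sum>w\<in>V. Q v w * \<phi> w) = PF_eigenvalue V Q * \<phi> v)"

definition mult_fun :: "(int ^ 'd \<Rightarrow> 'x \<Rightarrow> 'x) \<Rightarrow> 'x set \<Rightarrow> real ^ 'd \<Rightarrow> ('x \<Rightarrow> real) \<Rightarrow> 'x \<Rightarrow> real" where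
  "mult_fun act V \<alpha> \<phi> x = (case coord act V x of (z, v) \<Rightarrow> exp (\<alpha> \<bullet> zr z) * \<phi> v)"

end

theory Submission
  imports Defs "Jordan_Normal_Form.Spectral_Radius"
begin

(* A positive multiplicative function f with f (z v) = exp <alpha, z> f v is determined by its
   restriction to the fundamental domain V, and on such functions the equation H f = lambda f becomes
   the eigenvalue equation Q_alpha f|V = (max deg - lambda) f|V.  Since the graph is connected, Q_alpha
   is a nonnegative irreducible matrix, so by Perron-Frobenius (proved here by the Collatz-Wielandt
   argument) it has a positive eigenvector, unique up to scaling, whose eigenvalue is the spectral
   radius theta(alpha).  Normalising at x0 yields the unique element of M_R with rho = alpha. *)

text \<open>Jordan_Normal_Form reuses \<open>\<bullet>\<close> and \<open>$\<close> for its own vectors.\<close>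
no_notation Matrix.scalar_prod (infix "\<bullet>" 70) and Matrix.vec_index (infixl "$" 100)

section \<open>Characters of \<open>\<int>\<^sup>d\<close>\<close>

lemma zr_add: "zr (z + w) = zr z + zr w"
  by (simp add: zr_def Finite_Cartesian_Product.vec_eq_iff)

lemma zr_zero [simp]: "zr 0 = 0"
  by (simp add: zr_def Finite_Cartesian_Product.vec_eq_iff)

lemma zr_axis: "zr (axis i 1) = axis i 1"
  by (simp add: zr_def Finite_Cartesian_Product.vec_eq_iff axis_def)

lemma additive_eq_inner_zr:
  fixes L :: "int ^ 'd::finite \<Rightarrow> real"
  assumes add: "\<And>z w. L (z + w) = L z + L w"
  shows "L z = (\<chi> i. L (axis i 1)) \<bullet> zr z"
proof -
  have L_zero: "L 0 = 0" using add[of 0 0] by simp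
  have L_sum: "L (sum u S) = (\<Sum>i\<in>S. L (u i))" if "finite S" for u :: "'i \<Rightarrow> int ^ 'd" and S
    using that by (induction S rule: finite_induct) (simp_all add: L_zero add)
  have axis_add: "axis i (k + l) = axis i k + (axis i l :: int ^ 'd)" for i k l
    by (simp add: Finite_Cartesian_Product.vec_eq_iff axis_def)
  have L_axis: "L (axis i k) = of_int k * L (axis i 1)" for i k
  proof (induction k rule: int_induct[where k = 0])
    case base
    have "axis i 0 = (0 :: int ^ 'd)"
      by (simp add: Finite_Cartesian_Product.vec_eq_iff axis_def)
    then show ?case
      using L_zero by (metis mult_zero_left of_int_0)
  next
    case (step1 k)
    then show ?case by (simp add: axis_add add algebra_simps)
  next
    case (step2 k)
    have "axis i k = axis i (k - 1) + axis i (1::int)"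
      by (simp flip: axis_add)
    then have "L (axis i k) = L (axis i (k - 1)) + L (axis i 1)"
      by (simp add: add)
    with step2 show ?case by (simp add: algebra_simps)
  qed
  have z_eq: "z = (\<Sum>i\<in>UNIV. axis i (z $ i))"
    by (simp add: Finite_Cartesian_Product.vec_eq_iff axis_def)
  have "L z = (\<Sum>i\<in>UNIV. L (axis i (z $ i)))"
    by (subst z_eq) (simp add: L_sum)
  also have "\<dots> = (\<chi> i. L (axis i 1)) \<bullet> zr z"
  proof -
    have "L (axis i (z $ i)) = (\<chi> i. L (axis i 1)) $ i * zr z $ i" for i
      using L_axis[of i "z $ i"] by (simp add: zr_def mult.commute)
    then show ?thesis
      by (simp only: inner_vec_def inner_real_def)
  qed
  finally show ?thesis .
qed

lemma positive_character_eq_exp: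
  fixes \<gamma> :: "int ^ 'd::finite \<Rightarrow> real"
  assumes pos: "\<And>z. \<gamma> z > 0" and hom: "\<And>z w. \<gamma> (z + w) = \<gamma> z * \<gamma> w"
  shows "\<gamma> z = exp ((\<chi> i. ln (\<gamma> (axis i 1))) \<bullet> zr z)"
proof -
  have "ln (\<gamma> z) = (\<chi> i. ln (\<gamma> (axis i 1))) \<bullet> zr z"
    by (rule additive_eq_inner_zr[where L = "\<lambda>z. ln (\<gamma> z)"]) (simp add: hom ln_mult pos[THEN order_less_imp_not_eq2])
  then show ?thesis
    using exp_ln[OF pos[of z]] by simp
qed

lemma inner_zr_eqD:
  assumes "\<And>z. \<alpha> \<bullet> zr z = \<beta> \<bullet> zr z"
  shows "\<alpha> = \<beta>"
  using assms[of "axis _ 1"] by (simp add: Finite_Cartesian_Product.vec_eq_iff zr_axis inner_axis)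

lemma exp_inner_zr_add: "exp (\<alpha> \<bullet> zr (z + w)) = exp (\<alpha> \<bullet> zr z) * exp (\<alpha> \<bullet> zr w)"
  by (simp add: zr_add inner_add_right exp_add)

section \<open>Perron--Frobenius theory for matrices indexed by a finite set\<close>

lemma rtranclp_exits_set:
  assumes "R\<^sup>*\<^sup>* i j" "i \<in> Z" "j \<notin> Z"
  shows "\<exists>u w. R u w \<and> u \<in> Z \<and> w \<notin> Z"
  using assms by (induction rule: rtranclp_induct) auto

lemma eigenvalues_on_subset_spectrum:
  fixes A :: "'i \<Rightarrow> 'i \<Rightarrow> real"
  assumes vs: "set vs = V" "distinct vs"
  defines "n \<equiv> length vs"
  shows "eigenvalues_on V A \<subseteq> spectrum (mat n n (\<lambda>(i, j). complex_of_real (A (vs ! i) (vs ! j))))"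
    (is "_ \<subseteq> spectrum ?M")
proof
  have img: "nth vs ` {0..<n} = V"
    using vs by (simp add: n_def nth_image)
  have inj: "inj_on (nth vs) {0..<n}"
    using vs by (intro inj_on_nth) (auto simp: n_def)
  fix \<mu> assume "\<mu> \<in> eigenvalues_on V A"
  then obtain u :: "'i \<Rightarrow> complex" where u: "\<exists>v\<in>V. u v \<noteq> 0"
    and eq: "\<forall>v\<in>V. (\<Sum>w\<in>V. complex_of_real (A v w) * u w) = \<mu> * u v"
    by (auto simp: eigenvalues_on_def)
  define uu where "uu = vec n (\<lambda>i. u (vs ! i))"
  have "uu \<noteq> 0\<^sub>v n"
  proof
    assume "uu = 0\<^sub>v n"
    obtain v where v: "v \<in> V" "u v \<noteq> 0" using u by blast
    then obtain k where "k < n" "vs ! k = v" using img by force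
    moreover have "vec_index uu k = 0"
      using \<open>uu = 0\<^sub>v n\<close> \<open>k < n\<close> by simp
    ultimately show False
      using v by (simp add: uu_def)
  qed
  moreover have "?M *\<^sub>v uu = \<mu> \<cdot>\<^sub>v uu"
  proof (rule eq_vecI)
    fix i assume "i < dim_vec (\<mu> \<cdot>\<^sub>v uu)"
    then have i: "i < n" by (simp add: uu_def)
    have "vec_index (?M *\<^sub>v uu) i = (\<Sum>j\<in>{0..<n}. complex_of_real (A (vs ! i) (vs ! j)) * u (vs ! j))"
      using i by (simp add: uu_def scalar_prod_def)
    also have "\<dots> = (\<Sum>w\<in>V. complex_of_real (A (vs ! i) w) * u w)"
      unfolding img[symmetric] by (simp add: sum.reindex[OF inj])
    also have "\<dots> = \<mu> * u (vs ! i)"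
      using eq i img by force
    finally show "vec_index (?M *\<^sub>v uu) i = vec_index (\<mu> \<cdot>\<^sub>v uu) i"
      using i by (simp add: uu_def)
  qed (simp add: uu_def)
  ultimately have "eigenvector ?M uu \<mu>"
    unfolding eigenvector_def by (simp add: uu_def)
  then show "\<mu> \<in> spectrum ?M"
    by (auto simp: spectrum_def eigenvalue_def)
qed

lemma finite_eigenvalues_on:
  fixes A :: "'i \<Rightarrow> 'i \<Rightarrow> real"
  assumes "finite V"
  shows "finite (eigenvalues_on V A)"
proof -
  obtain vs where "set vs = V" "distinct vs"
    using finite_distinct_list[OF assms] by blast
  then have "eigenvalues_on V A
      \<subseteq> spectrum (mat (length vs) (length vs) (\<lambda>(i, j). complex_of_real (A (vs ! i) (vs ! j))))"
    by (rule eigenvalues_on_subset_spectrum)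
  moreover have "finite (spectrum (mat n n f))" for n and f :: "nat \<times> nat \<Rightarrow> complex"
    using card_finite_spectrum(1)[of "mat n n f" n] by simp
  ultimately show ?thesis
    by (rule finite_subset)
qed

text \<open>Coordinates outside \<open>V\<close> are pinned to \<open>0\<close>, which makes the simplex compact in the product
  topology of \<open>'i \<Rightarrow> real\<close>.\<close>
definition simplex_on :: "'i set \<Rightarrow> ('i \<Rightarrow> real) set" where
  "simplex_on V = {x. (\<forall>i. x i \<in> (if i \<in> V then {0..1} else {0})) \<and> (\<Sum>i\<in>V. x i) = 1}"

definition normalise_on :: "'i set \<Rightarrow> ('i \<Rightarrow> real) \<Rightarrow> 'i \<Rightarrow> real" where
  "normalise_on V x i = (if i \<in> V then x i / (\<Sum>j\<in>V. x j) else 0)"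

lemma continuous_on_snd_apply: "continuous_on S (\<lambda>p :: 'a::topological_space \<times> ('i \<Rightarrow> real). snd p i)"
  by (rule continuous_on_product_then_coordinatewise[where f = snd])
    (rule continuous_on_snd[OF continuous_on_id])

lemma compact_simplex_on:
  fixes V :: "'i set"
  shows "compact (simplex_on V)"
proof -
  define F where "F i = (if i \<in> V then {0..1::real} else {0})" for i
  have "compactin (product_topology (\<lambda>i. euclidean) UNIV) (PiE UNIV F)"
    by (subst compactin_PiE) (auto simp: F_def)
  then have "compact (PiE UNIV F)"
    by (simp add: euclidean_product_topology)
  moreover have "closed {x :: 'i \<Rightarrow> real. (\<Sum>i\<in>V. x i) = 1}"
    by (intro closed_Collect_eq continuous_on_sum continuous_on_product_coordinates continuous_on_const)
  moreover have "simplex_on V = PiE UNIV F \<inter> {x. (\<Sum>i\<in>V. x i) = 1}"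
    by (auto simp: simplex_on_def PiE_def extensional_def Pi_def F_def)
  ultimately show ?thesis
    by (simp add: compact_Int_closed)
qed

lemma mem_simplex_onD:
  assumes "x \<in> simplex_on V"
  shows "\<forall>i\<in>V. 0 \<le> x i" "(\<Sum>i\<in>V. x i) = 1"
proof -
  have box: "\<forall>i. x i \<in> (if i \<in> V then {0..1} else {0})" and "(\<Sum>i\<in>V. x i) = 1"
    using assms by (simp_all add: simplex_on_def)
  have "0 \<le> x i" if "i \<in> V" for i
    using spec[OF box, of i] that by simp
  then show "\<forall>i\<in>V. 0 \<le> x i" by blast
  show "(\<Sum>i\<in>V. x i) = 1" by fact
qed

lemma normalise_on_mem_simplex_on:
  assumes "finite V" and nonneg: "\<forall>i\<in>V. x i \<ge> 0" and "\<exists>i\<in>V. x i > 0"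
  shows "normalise_on V x \<in> simplex_on V"
proof -
  have pos: "(\<Sum>j\<in>V. x j) > 0"
    using assms by (meson sum_pos2)
  have "x i \<le> (\<Sum>j\<in>V. x j)" if "i \<in> V" for i
    using assms that by (intro member_le_sum) auto
  moreover have "(\<Sum>i\<in>V. normalise_on V x i) = 1"
    using pos by (simp add: normalise_on_def sum_divide_distrib[symmetric])
  ultimately show ?thesis
    using nonneg pos by (auto simp: simplex_on_def normalise_on_def)
qed

locale nonneg_matrix =
  fixes V :: "'i set" and A :: "'i \<Rightarrow> 'i \<Rightarrow> real"
  assumes finite_V: "finite V" and V_nonempty: "V \<noteq> {}"
    and nonneg: "\<And>i j. i \<in> V \<Longrightarrow> j \<in> V \<Longrightarrow> 0 \<le> A i j"
begin

lemma eigenvalue_norm_le: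
  assumes pos: "\<forall>v\<in>V. \<phi> v > 0" and eig: "\<forall>v\<in>V. (\<Sum>w\<in>V. A v w * \<phi> w) = r * \<phi> v"
    and \<mu>: "\<mu> \<in> eigenvalues_on V A"
  shows "cmod \<mu> \<le> r"
proof -
  obtain u :: "'i \<Rightarrow> complex" where u: "\<exists>v\<in>V. u v \<noteq> 0"
    and eq: "\<forall>v\<in>V. (\<Sum>w\<in>V. complex_of_real (A v w) * u w) = \<mu> * u v"
    using \<mu> by (auto simp: eigenvalues_on_def)
  \<comment> \<open>Compare \<open>|u|\<close> with the smallest multiple of \<open>\<phi>\<close> dominating it; they touch at \<open>v0\<close>.\<close>
  define m where "m = Max ((\<lambda>v. cmod (u v) / \<phi> v) ` V)"
  have "m \<in> (\<lambda>v. cmod (u v) / \<phi> v) ` V"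
    unfolding m_def using finite_V V_nonempty by (intro Max_in) auto
  then obtain v0 where v0: "v0 \<in> V" "m = cmod (u v0) / \<phi> v0" by blast
  have le_m: "cmod (u w) \<le> m * \<phi> w" if "w \<in> V" for w
  proof -
    have "cmod (u w) / \<phi> w \<le> m"
      unfolding m_def using finite_V that by (intro Max_ge) auto
    then show ?thesis
      using pos that by (simp add: pos_divide_le_eq)
  qed
  obtain v2 where v2: "v2 \<in> V" "u v2 \<noteq> 0" using u by blast
  then have "0 < m * \<phi> v2"
    using le_m[OF v2(1)] by (meson less_le_trans zero_less_norm_iff)
  moreover have "\<phi> v2 > 0" using pos v2(1) by blast
  ultimately have "m > 0" by (rule zero_less_mult_pos2)
  have "\<phi> v0 > 0" using pos v0(1) by blast
  with v0(2) have u_v0: "cmod (u v0) = m * \<phi> v0" by simp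
  have "cmod \<mu> * cmod (u v0) = cmod (\<Sum>w\<in>V. complex_of_real (A v0 w) * u w)"
    using eq v0(1) by (simp add: norm_mult)
  also have "\<dots> \<le> (\<Sum>w\<in>V. cmod (complex_of_real (A v0 w) * u w))"
    by (rule norm_sum)
  also have "\<dots> = (\<Sum>w\<in>V. A v0 w * cmod (u w))"
    using nonneg v0(1) by (simp add: norm_mult)
  also have "\<dots> \<le> (\<Sum>w\<in>V. A v0 w * (m * \<phi> w))"
    by (rule sum_mono) (use nonneg v0(1) le_m in \<open>auto intro: mult_left_mono\<close>)
  also have "\<dots> = m * (\<Sum>w\<in>V. A v0 w * \<phi> w)"
    by (simp add: sum_distrib_left algebra_simps)
  also have "\<dots> = r * cmod (u v0)"
    using eig v0(1) u_v0 by simp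
  finally show ?thesis
    using \<open>m > 0\<close> \<open>\<phi> v0 > 0\<close> u_v0 by simp
qed

lemma PF_eigenvalue_eqI:
  assumes pos: "\<forall>v\<in>V. \<phi> v > 0" and eig: "\<forall>v\<in>V. (\<Sum>w\<in>V. A v w * \<phi> w) = r * \<phi> v"
  shows "PF_eigenvalue V A = r"
proof -
  obtain v where v: "v \<in> V" using V_nonempty by blast
  have "0 \<le> (\<Sum>w\<in>V. A v w * \<phi> w)"
    using nonneg pos v by (auto intro!: sum_nonneg simp: less_imp_le)
  moreover have "\<phi> v > 0" using pos v by blast
  ultimately have "r \<ge> 0"
    using eig v by (simp add: zero_le_mult_iff)
  have "complex_of_real r \<in> eigenvalues_on V A"
    unfolding eigenvalues_on_def
  proof (intro CollectI exI[of _ "\<lambda>v. complex_of_real (\<phi> v)"] conjI ballI)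
    show "\<exists>v\<in>V. complex_of_real (\<phi> v) \<noteq> 0"
      using \<open>v \<in> V\<close> \<open>\<phi> v > 0\<close> by (intro bexI[of _ v]) auto
    fix w assume "w \<in> V"
    have "(\<Sum>x\<in>V. complex_of_real (A w x) * complex_of_real (\<phi> x))
        = complex_of_real (\<Sum>x\<in>V. A w x * \<phi> x)"
      by simp
    also have "\<dots> = complex_of_real r * complex_of_real (\<phi> w)"
      using eig \<open>w \<in> V\<close> by simp
    finally show "(\<Sum>x\<in>V. complex_of_real (A w x) * complex_of_real (\<phi> x))
        = complex_of_real r * complex_of_real (\<phi> w)" .
  qed
  show ?thesis
    unfolding PF_eigenvalue_def
  proof (rule Max_eqI)
    show "finite (cmod ` eigenvalues_on V A)"
      using finite_eigenvalues_on[OF finite_V] by simp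
    show "r \<in> cmod ` eigenvalues_on V A"
      using \<open>complex_of_real r \<in> eigenvalues_on V A\<close> \<open>r \<ge> 0\<close> by force
  qed (use eigenvalue_norm_le[OF pos eig] in auto)
qed

lemma supersolution_le_entry_sum:
  assumes "\<exists>i\<in>V. x i > 0" and super: "\<forall>i\<in>V. t * x i \<le> (\<Sum>j\<in>V. A i j * x j)"
  shows "t \<le> (\<Sum>i\<in>V. \<Sum>j\<in>V. A i j)"
proof -
  define m where "m = Max (x ` V)"
  have "m \<in> x ` V"
    unfolding m_def using finite_V V_nonempty by (intro Max_in) auto
  then obtain i0 where i0: "i0 \<in> V" "x i0 = m" by blast
  have le_m: "x j \<le> m" if "j \<in> V" for j
    using finite_V that by (simp add: m_def)
  have "m > 0" using assms(1) le_m by force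
  have "t * m \<le> (\<Sum>j\<in>V. A i0 j * x j)"
    using super i0 by force
  also have "\<dots> \<le> (\<Sum>j\<in>V. A i0 j * m)"
    by (rule sum_mono) (use nonneg i0 le_m in \<open>auto intro: mult_left_mono\<close>)
  also have "\<dots> = m * (\<Sum>j\<in>V. A i0 j)"
    by (simp add: sum_distrib_left mult.commute)
  also have "\<dots> \<le> m * (\<Sum>i\<in>V. \<Sum>j\<in>V. A i j)"
    using \<open>m > 0\<close> i0 finite_V nonneg
    by (intro mult_left_mono member_le_sum[where f = "\<lambda>i. \<Sum>j\<in>V. A i j"]) (auto intro: sum_nonneg)
  finally show ?thesis
    using \<open>m > 0\<close> by simp
qed

lemma supersolution_normalise_on:
  assumes "\<forall>i\<in>V. x i \<ge> 0" "\<exists>i\<in>V. x i > 0" and super: "\<forall>i\<in>V. t * x i \<le> (\<Sum>j\<in>V. A i j * x j)"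
  shows "\<forall>i\<in>V. t * normalise_on V x i \<le> (\<Sum>j\<in>V. A i j * normalise_on V x j)"
proof
  fix i assume "i \<in> V"
  define s where "s = (\<Sum>j\<in>V. x j)"
  have "s > 0"
    unfolding s_def using assms(1,2) finite_V by (meson sum_pos2)
  have "(\<Sum>j\<in>V. A i j * normalise_on V x j) = (\<Sum>j\<in>V. A i j * x j) / s"
    by (simp add: normalise_on_def s_def sum_divide_distrib)
  then show "t * normalise_on V x i \<le> (\<Sum>j\<in>V. A i j * normalise_on V x j)"
    using super \<open>i \<in> V\<close> \<open>s > 0\<close> by (simp add: normalise_on_def s_def divide_right_mono)
qed

text \<open>The bound on \<open>t\<close>, harmless by \<open>supersolution_le_entry_sum\<close>, makes the set compact.\<close>
definition collatz_wielandt_set :: "(real \<times> ('i \<Rightarrow> real)) set" where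
  "collatz_wielandt_set = {(t, x). 0 \<le> t \<and> t \<le> (\<Sum>i\<in>V. \<Sum>j\<in>V. A i j) \<and> x \<in> simplex_on V
      \<and> (\<forall>i\<in>V. t * x i \<le> (\<Sum>j\<in>V. A i j * x j))}"

lemma compact_collatz_wielandt_set: "compact collatz_wielandt_set"
proof -
  define S where "S i = {p :: real \<times> ('i \<Rightarrow> real). fst p * snd p i \<le> (\<Sum>j\<in>V. A i j * snd p j)}" for i
  have "closed (S i)" for i
    unfolding S_def
    by (intro closed_Collect_le continuous_on_sum continuous_on_snd_apply continuous_intros)
  moreover have "collatz_wielandt_set = ({0..\<Sum>i\<in>V. \<Sum>j\<in>V. A i j} \<times> simplex_on V) \<inter> (\<Inter>i\<in>V. S i)"
    by (auto simp: collatz_wielandt_set_def S_def)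
  ultimately show ?thesis
    by (metis closed_INT compact_Icc compact_Int_closed compact_Times compact_simplex_on)
qed

lemma collatz_wielandt_set_nonempty: "collatz_wielandt_set \<noteq> {}"
proof -
  have "(0, normalise_on V (\<lambda>_. 1)) \<in> collatz_wielandt_set"
    using finite_V V_nonempty nonneg normalise_on_mem_simplex_on[of V "\<lambda>_. 1"]
    by (auto simp: collatz_wielandt_set_def normalise_on_def intro!: sum_nonneg)
  then show ?thesis by blast
qed

definition slack :: "real \<Rightarrow> ('i \<Rightarrow> real) \<Rightarrow> 'i \<Rightarrow> real" where
  "slack r x i = (\<Sum>j\<in>V. A i j * x j) - r * x i"

lemma slack_add_slack:
  "slack r (\<lambda>j. x j + \<delta> * slack r x j) i
    = (1 - \<delta> * r) * slack r x i + \<delta> * (\<Sum>j\<in>V. A i j * slack r x j)"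
proof -
  have "(\<Sum>j\<in>V. A i j * (x j + \<delta> * slack r x j)) = (\<Sum>j\<in>V. A i j * x j) + \<delta> * (\<Sum>j\<in>V. A i j * slack r x j)"
    by (simp add: algebra_simps sum.distrib sum_distrib_left)
  then show ?thesis
    by (simp add: slack_def [of r "\<lambda>j. x j + \<delta> * slack r x j"] slack_def [of r x i] algebra_simps)
qed

lemma positive_slack_improves:
  assumes nonneg_x: "\<forall>i\<in>V. x i \<ge> 0" and pos: "\<forall>i\<in>V. slack r x i > 0"
  shows "\<exists>\<epsilon>>0. \<forall>i\<in>V. (r + \<epsilon>) * x i \<le> (\<Sum>j\<in>V. A i j * x j)"
proof -
  define \<epsilon> where "\<epsilon> = Min ((\<lambda>i. slack r x i / (x i + 1)) ` V)"
  have "\<epsilon> > 0"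
    unfolding \<epsilon>_def using finite_V V_nonempty pos nonneg_x by (subst Min_gr_iff) auto
  moreover have "(r + \<epsilon>) * x i \<le> (\<Sum>j\<in>V. A i j * x j)" if i: "i \<in> V" for i
  proof -
    have "\<epsilon> \<le> slack r x i / (x i + 1)"
      unfolding \<epsilon>_def using finite_V i by (intro Min_le) auto
    then have "\<epsilon> * (x i + 1) \<le> slack r x i"
      using nonneg_x i by (simp add: pos_le_divide_eq add_nonneg_pos)
    then show ?thesis
      using \<open>\<epsilon> > 0\<close> by (simp add: slack_def algebra_simps)
  qed
  ultimately show ?thesis by blast
qed

end

locale irreducible_matrix = nonneg_matrix +
  assumes irreducible: "\<And>i j. i \<in> V \<Longrightarrow> j \<in> V \<Longrightarrow> (\<lambda>i j. i \<in> V \<and> j \<in> V \<and> A i j > 0)\<^sup>*\<^sup>* i j"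
begin

lemma nonneg_eigenvector_vanishes:
  assumes nonneg_x: "\<forall>i\<in>V. 0 \<le> x i" and eig: "\<forall>i\<in>V. (\<Sum>j\<in>V. A i j * x j) = r * x i"
    and i0: "i0 \<in> V" "x i0 = 0" and j: "j \<in> V"
  shows "x j = 0"
proof -
  have step: "x w = 0" if "k \<in> V" "w \<in> V" "A k w > 0" "x k = 0" for k w
  proof -
    have "(\<Sum>j\<in>V. A k j * x j) = 0"
      using eig that by simp
    moreover have "\<forall>j\<in>V. 0 \<le> A k j * x j"
      using nonneg nonneg_x that(1) by simp
    ultimately have "\<forall>j\<in>V. A k j * x j = 0"
      using finite_V by (simp add: sum_nonneg_eq_0_iff)
    then show ?thesis using that by auto
  qed
  from irreducible[OF i0(1) j] show ?thesis
    by (induction rule: rtranclp_induct) (use i0 step in auto)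
qed

lemma slack_zeros_shrink:
  assumes nonneg_x: "\<forall>i\<in>V. x i \<ge> 0" and slack_nonneg: "\<forall>i\<in>V. slack r x i \<ge> 0"
    and i0: "i0 \<in> V" "slack r x i0 = 0" and i1: "i1 \<in> V" "slack r x i1 \<noteq> 0"
  obtains x' where "\<forall>i\<in>V. x' i \<ge> 0" "\<forall>i\<in>V. slack r x' i \<ge> 0"
    "{i\<in>V. slack r x' i = 0} \<subset> {i\<in>V. slack r x i = 0}"
proof -
  define Z where "Z = {i\<in>V. slack r x i = 0}"
  define \<delta> where "\<delta> = 1 / (\<bar>r\<bar> + 1)"
  have "\<delta> > 0" by (simp add: \<delta>_def)
  have "\<delta> * r \<le> \<delta> * \<bar>r\<bar>" using \<open>\<delta> > 0\<close> by (simp add: mult_left_mono)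
  also have "\<delta> * \<bar>r\<bar> < 1" by (simp add: \<delta>_def)
  finally have "1 - \<delta> * r > 0" by simp
  define x' where "x' i = x i + \<delta> * slack r x i" for i
  define Ay where "Ay i = (\<Sum>j\<in>V. A i j * slack r x j)" for i
  have Ay_nonneg: "Ay i \<ge> 0" if "i \<in> V" for i
    unfolding Ay_def using that nonneg slack_nonneg by (auto intro: sum_nonneg)
  have slack_x': "slack r x' i = (1 - \<delta> * r) * slack r x i + \<delta> * Ay i" for i
    unfolding x'_def Ay_def by (rule slack_add_slack)
  \<comment> \<open>Following an edge u \<rightarrow> w of A out of the zero set of the slack creates slack at u.\<close>
  have "i0 \<in> Z" "i1 \<notin> Z"
    using i0 i1 by (auto simp: Z_def)
  then obtain u w where uw: "u \<in> V" "w \<in> V" "A u w > 0" "u \<in> Z" "w \<notin> Z"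
    using rtranclp_exits_set[OF irreducible[OF i0(1) i1(1)]] by blast
  have "slack r x w > 0" using uw slack_nonneg by (force simp: Z_def)
  then have "A u w * slack r x w > 0" using uw by simp
  moreover have "A u w * slack r x w \<le> Ay u"
    unfolding Ay_def using uw finite_V nonneg slack_nonneg
    by (intro member_le_sum[where f = "\<lambda>j. A u j * slack r x j"]) auto
  ultimately have "slack r x' u > 0"
    using uw \<open>\<delta> > 0\<close> by (simp add: slack_x' Z_def)
  moreover have "{i\<in>V. slack r x' i = 0} \<subseteq> Z"
  proof
    fix i assume i: "i \<in> {i\<in>V. slack r x' i = 0}"
    have "\<delta> * Ay i \<ge> 0"
      using i Ay_nonneg \<open>\<delta> > 0\<close> by simp
    then have "(1 - \<delta> * r) * slack r x i \<le> 0"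
      using i slack_x'[of i] by simp
    then have "slack r x i \<le> 0"
      using \<open>1 - \<delta> * r > 0\<close> by (simp add: mult_le_0_iff)
    then show "i \<in> Z"
      using i slack_nonneg by (force simp: Z_def)
  qed
  ultimately have "{i\<in>V. slack r x' i = 0} \<subset> Z" using uw by auto
  moreover have "\<forall>i\<in>V. x' i \<ge> 0"
    using nonneg_x slack_nonneg \<open>\<delta> > 0\<close> by (simp add: x'_def)
  moreover have "\<forall>i\<in>V. slack r x' i \<ge> 0"
    using slack_x' slack_nonneg Ay_nonneg \<open>\<delta> > 0\<close> \<open>1 - \<delta> * r > 0\<close> by simp
  ultimately show ?thesis using that by (auto simp: Z_def)
qed

lemma nonzero_slack_improves:
  assumes "\<forall>i\<in>V. x i \<ge> 0" "\<forall>i\<in>V. slack r x i \<ge> 0" "\<exists>i\<in>V. slack r x i \<noteq> 0"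
  shows "\<exists>x' \<epsilon>. \<epsilon> > 0 \<and> (\<forall>i\<in>V. x' i \<ge> 0) \<and> (\<exists>i\<in>V. x' i > 0)
    \<and> (\<forall>i\<in>V. (r + \<epsilon>) * x' i \<le> (\<Sum>j\<in>V. A i j * x' j))"
  using assms
proof (induction "card {i\<in>V. slack r x i = 0}" arbitrary: x rule: less_induct)
  case less
  obtain i1 where i1: "i1 \<in> V" "slack r x i1 \<noteq> 0" using less.prems(3) by blast
  show ?case
  proof (cases "\<exists>i0\<in>V. slack r x i0 = 0")
    case True
    then obtain i0 where "i0 \<in> V" "slack r x i0 = 0" by blast
    from slack_zeros_shrink[OF less.prems(1,2) this i1] obtain x'
      where x': "\<forall>i\<in>V. x' i \<ge> 0" "\<forall>i\<in>V. slack r x' i \<ge> 0"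
        and shrink: "{i\<in>V. slack r x' i = 0} \<subset> {i\<in>V. slack r x i = 0}" .
    have fewer_zeros: "card {i\<in>V. slack r x' i = 0} < card {i\<in>V. slack r x i = 0}"
      using shrink finite_V by (simp add: psubset_card_mono)
    have "\<exists>i\<in>V. slack r x' i \<noteq> 0"
      using shrink by blast
    from less.hyps[OF fewer_zeros x' this] show ?thesis .
  next
    case False
    then have slack_pos: "\<forall>i\<in>V. slack r x i > 0"
      using less.prems(2) by force
    obtain \<epsilon> where \<epsilon>: "\<epsilon> > 0" "\<forall>i\<in>V. (r + \<epsilon>) * x i \<le> (\<Sum>j\<in>V. A i j * x j)"
      using positive_slack_improves[OF less.prems(1) slack_pos] by blast
    have "\<exists>i\<in>V. x i > 0"
    proof (rule ccontr)
      assume "\<not> (\<exists>i\<in>V. x i > 0)"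
      then have "\<forall>i\<in>V. x i = 0" using less.prems(1) by force
      then show False using i1 by (simp add: slack_def)
    qed
    with \<epsilon> less.prems(1) show ?thesis by blast
  qed
qed

text \<open>Collatz--Wielandt: the largest \<open>t\<close> with \<open>A x \<ge> t x\<close> for some \<open>x\<close> in the simplex is attained
  by compactness, and by \<open>nonzero_slack_improves\<close> the inequality is an equality there.\<close>
lemma positive_eigenvector_exists:
  obtains \<phi> r where "\<forall>v\<in>V. \<phi> v > 0" "\<forall>v\<in>V. (\<Sum>w\<in>V. A v w * \<phi> w) = r * \<phi> v"
proof -
  obtain r x where rx: "(r, x) \<in> collatz_wielandt_set"
    and max: "\<forall>p\<in>collatz_wielandt_set. fst p \<le> r"
    using continuous_attains_sup[OF compact_collatz_wielandt_set collatz_wielandt_set_nonempty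
        continuous_on_fst[OF continuous_on_id]] by (metis prod.collapse)
  have "r \<ge> 0" "x \<in> simplex_on V" and super: "\<forall>i\<in>V. r * x i \<le> (\<Sum>j\<in>V. A i j * x j)"
    using rx by (simp_all add: collatz_wielandt_set_def)
  note nonneg_x = mem_simplex_onD(1)[OF \<open>x \<in> simplex_on V\<close>]
  have "\<forall>i\<in>V. slack r x i = 0"
  proof (rule ccontr)
    assume "\<not> (\<forall>i\<in>V. slack r x i = 0)"
    then have "\<exists>i\<in>V. slack r x i \<noteq> 0" by blast
    moreover have "\<forall>i\<in>V. slack r x i \<ge> 0" using super by (simp add: slack_def)
    ultimately have "\<exists>x' \<epsilon>. \<epsilon> > 0 \<and> (\<forall>i\<in>V. x' i \<ge> 0) \<and> (\<exists>i\<in>V. x' i > 0)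
        \<and> (\<forall>i\<in>V. (r + \<epsilon>) * x' i \<le> (\<Sum>j\<in>V. A i j * x' j))"
      by (intro nonzero_slack_improves[OF nonneg_x])
    then obtain x' \<epsilon> where "\<epsilon> > 0" and x': "\<forall>i\<in>V. x' i \<ge> 0" "\<exists>i\<in>V. x' i > 0"
      and super': "\<forall>i\<in>V. (r + \<epsilon>) * x' i \<le> (\<Sum>j\<in>V. A i j * x' j)"
      by blast
    have "(r + \<epsilon>, normalise_on V x') \<in> collatz_wielandt_set"
      unfolding collatz_wielandt_set_def
      using \<open>r \<ge> 0\<close> \<open>\<epsilon> > 0\<close> supersolution_le_entry_sum[OF x'(2) super']
        normalise_on_mem_simplex_on[OF finite_V x'] supersolution_normalise_on[OF x' super']
      by simp
    then have "r + \<epsilon> \<le> r"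
      using max by (metis fst_conv)
    with \<open>\<epsilon> > 0\<close> show False by simp
  qed
  then have eig: "\<forall>i\<in>V. (\<Sum>j\<in>V. A i j * x j) = r * x i"
    by (simp add: slack_def)
  have "\<forall>v\<in>V. x v > 0"
  proof (rule ccontr)
    assume "\<not> (\<forall>v\<in>V. x v > 0)"
    then obtain i0 where "i0 \<in> V" "x i0 = 0" using nonneg_x by force
    then have "\<forall>j\<in>V. x j = 0"
      using nonneg_eigenvector_vanishes[OF nonneg_x eig] by blast
    with mem_simplex_onD(2)[OF \<open>x \<in> simplex_on V\<close>] show False by simp
  qed
  then show ?thesis
    using eig by (rule that)
qed

lemma positive_eigenvectors_proportional:
  assumes pos\<phi>: "\<forall>v\<in>V. \<phi> v > 0" and eig\<phi>: "\<forall>v\<in>V. (\<Sum>w\<in>V. A v w * \<phi> w) = r * \<phi> v"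
    and pos\<psi>: "\<forall>v\<in>V. \<psi> v > 0" and eig\<psi>: "\<forall>v\<in>V. (\<Sum>w\<in>V. A v w * \<psi> w) = r * \<psi> v"
  shows "\<exists>t. \<forall>v\<in>V. \<phi> v = t * \<psi> v"
proof -
  define t where "t = Min ((\<lambda>v. \<phi> v / \<psi> v) ` V)"
  have "t \<in> (\<lambda>v. \<phi> v / \<psi> v) ` V"
    unfolding t_def using finite_V V_nonempty by (intro Min_in) auto
  then obtain v0 where v0: "v0 \<in> V" "t = \<phi> v0 / \<psi> v0" by blast
  define u where "u v = \<phi> v - t * \<psi> v" for v
  have u_nonneg: "\<forall>v\<in>V. 0 \<le> u v"
  proof
    fix v assume "v \<in> V"
    then have "t \<le> \<phi> v / \<psi> v"
      unfolding t_def using finite_V by (intro Min_le) auto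
    then show "0 \<le> u v"
      using pos\<psi> \<open>v \<in> V\<close> by (simp add: u_def le_divide_eq)
  qed
  have "\<psi> v0 > 0" using pos\<psi> v0(1) by blast
  with v0(2) have "u v0 = 0" by (simp add: u_def)
  have "\<forall>v\<in>V. (\<Sum>w\<in>V. A v w * u w) = r * u v"
  proof
    fix v assume "v \<in> V"
    have "(\<Sum>w\<in>V. A v w * u w) = (\<Sum>w\<in>V. A v w * \<phi> w) - t * (\<Sum>w\<in>V. A v w * \<psi> w)"
      by (simp add: u_def algebra_simps sum_subtractf sum_distrib_left)
    then show "(\<Sum>w\<in>V. A v w * u w) = r * u v"
      using eig\<phi> eig\<psi> \<open>v \<in> V\<close> by (simp add: u_def algebra_simps)
  qed
  then have "\<forall>v\<in>V. u v = 0"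
    using nonneg_eigenvector_vanishes[OF u_nonneg _ v0(1) \<open>u v0 = 0\<close>] by blast
  then show ?thesis by (auto simp: u_def)
qed

end

section \<open>Periodic graphs\<close>

lemma infsum_finite_support:
  fixes f :: "'a \<Rightarrow> 'b::{topological_comm_monoid_add, t2_space}"
  assumes "finite F" "\<And>x. x \<notin> F \<Longrightarrow> f x = 0"
  shows "infsum f UNIV = sum f F"
  by (intro infsumI has_sum_finite_neutralI) (use assms in auto)

locale periodic_graph =
  fixes b :: "'x \<Rightarrow> 'x \<Rightarrow> real" and c :: "'x \<Rightarrow> real"
    and act :: "int ^ 'd::finite \<Rightarrow> 'x \<Rightarrow> 'x" and V :: "'x set" and x0 :: 'x
  assumes graph: "is_graph b" and locally_finite: "locally_finite b"
    and connected: "connected_graph b" and action: "is_action act"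
    and finite_V: "finite V" and fundamental_domain: "fundamental_domain act V"
    and invariant: "H_invariant b c act"
begin

lemma act_zero [simp]: "act 0 x = x"
  using action by (simp add: is_action_def)

lemma act_add: "act (z + w) x = act z (act w x)"
  using action by (simp add: is_action_def)

lemma act_neg_act [simp]: "act (- z) (act z x) = x"
  by (metis act_zero act_add add.left_inverse)

lemma act_eq_iff [simp]: "act z x = act z y \<longleftrightarrow> x = y"
  by (metis act_neg_act)

lemma fundamental_domain_cases:
  obtains z v where "v \<in> V" "x = act z v"
  using fundamental_domain unfolding fundamental_domain_def by (metis prod.collapse)

lemma fundamental_domain_unique:
  assumes "v \<in> V" "w \<in> V" "act z v = act z' w"
  shows "z = z'" "v = w"
proof -
  have "\<exists>!p. snd p \<in> V \<and> act z v = act (fst p) (snd p)"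
    using fundamental_domain unfolding fundamental_domain_def by blast
  then have "(z, v) = (z', w)"
    using assms by (metis fst_conv snd_conv)
  then show "z = z'" "v = w" by simp_all
qed

lemma inj_orbit_map: "inj (\<lambda>z. act z x)"
proof (rule injI)
  fix z z' assume "act z x = act z' x"
  obtain z1 v where v: "v \<in> V" "x = act z1 v" by (rule fundamental_domain_cases)
  with \<open>act z x = act z' x\<close> have "act (z + z1) v = act (z' + z1) v"
    by (simp add: act_add)
  then have "z + z1 = z' + z1"
    using fundamental_domain_unique(1)[OF v(1) v(1)] by blast
  then show "z = z'" by simp
qed

lemma coord_act:
  assumes "v \<in> V"
  shows "coord act V (act z v) = (z, v)"
  unfolding coord_def
proof (rule the_equality)
  fix p assume "snd p \<in> V \<and> act z v = act (fst p) (snd p)"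
  then show "p = (z, v)"
    using fundamental_domain_unique[of v "snd p" z "fst p"] assms by (metis prod.collapse)
qed (use assms in simp)

lemma V_nonempty: "V \<noteq> {}"
  using fundamental_domain_cases by blast

lemma mult_fun_act: "v \<in> V \<Longrightarrow> mult_fun act V \<alpha> \<phi> (act z v) = exp (\<alpha> \<bullet> zr z) * \<phi> v"
  by (simp add: mult_fun_def coord_act)

lemma mult_fun_on_V: "v \<in> V \<Longrightarrow> mult_fun act V \<alpha> \<phi> v = \<phi> v"
  using mult_fun_act[of v \<alpha> \<phi> 0] by simp

lemma mult_fun_act_shift:
  "mult_fun act V \<alpha> \<phi> (act z x) = exp (\<alpha> \<bullet> zr z) * mult_fun act V \<alpha> \<phi> x"
proof -
  obtain z' v where v: "v \<in> V" "x = act z' v" by (rule fundamental_domain_cases)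
  then have "act z x = act (z + z') v" by (simp add: act_add)
  with v show ?thesis by (simp add: mult_fun_act exp_inner_zr_add)
qed

lemma mult_fun_pos: "\<forall>v\<in>V. \<phi> v > 0 \<Longrightarrow> mult_fun act V \<alpha> \<phi> x > 0"
  by (rule fundamental_domain_cases[of x]) (simp add: mult_fun_act)

lemma mult_fun_divide: "mult_fun act V \<alpha> (\<lambda>v. \<phi> v / s) x = mult_fun act V \<alpha> \<phi> x / s"
  by (simp add: mult_fun_def split: prod.split)

definition neighbours :: "'x \<Rightarrow> 'x set" where
  "neighbours x = {y. b x y \<noteq> 0}"

lemma b_nonneg: "b x y \<ge> 0"
  using graph by (simp add: is_graph_def)

lemma finite_neighbours: "finite (neighbours x)"
proof -
  have "neighbours x = {y. b x y > 0}"
    using b_nonneg by (auto simp: neighbours_def order_less_le)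
  then show ?thesis
    using locally_finite by (simp add: locally_finite_def)
qed

lemma DomH_eq_UNIV: "DomH b = UNIV"
  unfolding DomH_def
  by (auto intro!: finite_nonzero_values_imp_summable_on finite_subset[OF _ finite_neighbours]
      simp: neighbours_def)

lemma Hop_eq: "Hop b c f x = deg b c x * f x - (\<Sum>y\<in>neighbours x. b x y * f y)"
proof -
  have "Hop b c f x = (\<Sum>y\<in>neighbours x. b x y * (f x - f y)) + c x * f x"
    unfolding Hop_def by (subst infsum_finite_support[OF finite_neighbours]) (auto simp: neighbours_def)
  moreover have "deg b c x = (\<Sum>y\<in>neighbours x. b x y) + c x"
    unfolding deg_def by (subst infsum_finite_support[OF finite_neighbours]) (auto simp: neighbours_def)
  ultimately show ?thesis
    by (simp add: algebra_simps sum_subtractf sum_distrib_left sum_distrib_right)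
qed

lemma Hop_cmult: "Hop b c (\<lambda>x. a * f x) x = a * Hop b c f x"
  by (simp add: Hop_eq algebra_simps sum_distrib_left)

lemma Hop_indicator:
  assumes "x \<noteq> y"
  shows "Hop b c (\<lambda>w. if w = y then 1 else 0) x = - b x y"
proof -
  have "(\<Sum>w\<in>neighbours x. b x w * (if w = y then 1 else 0)) = b x y"
    using finite_neighbours by (simp add: if_distrib[of "\<lambda>t. b x _ * t"] cong: if_cong)
      (auto simp: neighbours_def)
  then show ?thesis
    using assms by (simp add: Hop_eq)
qed

text \<open>Invariance of \<open>H\<close>, tested on indicator functions, recovers the invariance of \<open>b\<close> off the
  diagonal; on the diagonal \<open>b\<close> is invisible to \<open>H\<close>.\<close>
lemma b_act:
  assumes "x \<noteq> y"
  shows "b (act g x) (act g y) = b x y"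
proof -
  define d where "d = (\<lambda>w. if w = y then 1 else (0::real))"
  have "Tg act g d = (\<lambda>w. if w = act g y then 1 else 0)"
    unfolding Tg_def d_def by (rule ext) (metis act_neg_act minus_minus)
  moreover have "Hop b c (Tg act g d) (act g x) = Hop b c d x"
    using invariant DomH_eq_UNIV unfolding H_invariant_def by (simp add: Tg_def)
  ultimately show ?thesis
    using assms by (simp add: d_def Hop_indicator)
qed

lemma Hop_act_multiplicative:
  assumes "\<forall>z x. f (act z x) = \<gamma> z * f x"
  shows "Hop b c f (act z x) = \<gamma> z * Hop b c f x"
proof -
  have "Tg act (- z) f = (\<lambda>x. \<gamma> z * f x)"
    using assms by (intro ext) (simp add: Tg_def)
  moreover have "Hop b c (Tg act (- z) f) x = Tg act (- z) (Hop b c f) x"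
    using invariant DomH_eq_UNIV unfolding H_invariant_def by simp
  ultimately show ?thesis
    by (simp add: Tg_def Hop_cmult)
qed

abbreviation max_deg :: real where
  "max_deg \<equiv> Max (deg b c ` V)"

definition edge_shifts :: "'x \<Rightarrow> 'x \<Rightarrow> (int ^ 'd) set" where
  "edge_shifts v w = {z. act z w \<in> neighbours v}"

lemma finite_edge_shifts: "finite (edge_shifts v w)"
  unfolding edge_shifts_def using finite_vimageI[OF finite_neighbours inj_orbit_map]
  by (simp add: vimage_def)

lemma Qmat_eq:
  "Qmat b c act V \<alpha> v w = (\<Sum>z\<in>edge_shifts v w. b v (act z w) * exp (\<alpha> \<bullet> zr z))
     + (if w = v then max_deg - deg b c v else 0)"
proof -
  have "(\<Sum>\<^sub>\<infinity>z. b v' (act z u) * exp (\<alpha> \<bullet> zr z)) = (\<Sum>z\<in>edge_shifts v' u. b v' (act z u) * exp (\<alpha> \<bullet> zr z))"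
    for v' u
    by (rule infsum_finite_support[OF finite_edge_shifts]) (auto simp: edge_shifts_def neighbours_def)
  then show ?thesis
    by (simp add: Qmat_def)
qed

lemma Qmat_ge:
  assumes "v \<in> V" "w \<in> V"
  shows "Qmat b c act V \<alpha> v w \<ge> b v (act z w) * exp (\<alpha> \<bullet> zr z)"
proof -
  have "max_deg \<ge> deg b c v"
    using assms finite_V by simp
  moreover have "(\<Sum>z\<in>edge_shifts v w. b v (act z w) * exp (\<alpha> \<bullet> zr z)) \<ge> b v (act z w) * exp (\<alpha> \<bullet> zr z)"
  proof (cases "z \<in> edge_shifts v w")
    case True
    then show ?thesis
      by (intro member_le_sum[where f = "\<lambda>z. b v (act z w) * exp (\<alpha> \<bullet> zr z)"])
        (auto simp: finite_edge_shifts b_nonneg)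
  next
    case False
    then show ?thesis
      by (auto intro!: sum_nonneg simp: edge_shifts_def neighbours_def b_nonneg)
  qed
  moreover have "0 \<le> (if w = v then max_deg - deg b c v else 0)"
    using calculation(1) by simp
  ultimately show ?thesis
    unfolding Qmat_eq by linarith
qed

lemma Qmat_nonneg: "v \<in> V \<Longrightarrow> w \<in> V \<Longrightarrow> Qmat b c act V \<alpha> v w \<ge> 0"
  using Qmat_ge[where z = 0] b_nonneg by (meson exp_gt_zero less_imp_le mult_nonneg_nonneg order_trans)

lemma irreducible_matrix_Qmat: "irreducible_matrix V (Qmat b c act V \<alpha>)"
proof
  fix i j assume ij: "i \<in> V" "j \<in> V"
  let ?R = "\<lambda>i j. i \<in> V \<and> j \<in> V \<and> Qmat b c act V \<alpha> i j > 0"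
  define rep where "rep x = snd (coord act V x)" for x
  have rep_act: "rep (act z v) = v" if "v \<in> V" for z v
    using that by (simp add: rep_def coord_act)
  have edge: "?R\<^sup>*\<^sup>* (rep x) (rep y)" if "b x y > 0" for x y
  proof (cases "x = y")
    case False
    obtain z1 v1 where v1: "v1 \<in> V" "x = act z1 v1" by (rule fundamental_domain_cases)
    obtain z2 v2 where v2: "v2 \<in> V" "y = act z2 v2" by (rule fundamental_domain_cases)
    have "act (- z1) y = act (- z1 + z2) v2"
      using v2 by (simp only: act_add)
    then have "b v1 (act (- z1 + z2) v2) = b x y"
      using b_act[OF False, of "- z1"] v1 by simp
    then have "Qmat b c act V \<alpha> v1 v2 > 0"
      using that Qmat_ge[OF v1(1) v2(1), where z = "- z1 + z2" and \<alpha> = \<alpha>] by (smt (verit) exp_gt_zero mult_pos_pos)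
    then have "?R\<^sup>*\<^sup>* v1 v2"
      using v1 v2 by (intro r_into_rtranclp) simp
    then show ?thesis
      using v1 v2 by (simp add: rep_act)
  qed simp
  have "(\<lambda>u w. b u w > 0)\<^sup>*\<^sup>* i j"
    using connected by (simp add: connected_graph_def)
  then have "?R\<^sup>*\<^sup>* (rep i) (rep j)"
    by (induction rule: rtranclp_induct) (auto intro: rtranclp_trans edge)
  then show "?R\<^sup>*\<^sup>* i j"
    using rep_act[of i 0] rep_act[of j 0] ij by simp
qed (use finite_V V_nonempty Qmat_nonneg in auto)

lemma sum_neighbours_eq:
  assumes shift: "\<forall>z. \<forall>w\<in>V. f (act z w) = exp (\<alpha> \<bullet> zr z) * f w"
  shows "(\<Sum>y\<in>neighbours v. b v y * f y)
    = (\<Sum>w\<in>V. (\<Sum>z\<in>edge_shifts v w. b v (act z w) * exp (\<alpha> \<bullet> zr z)) * f w)"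
proof -
  have "bij_betw (\<lambda>(w, z). act z w) (Sigma V (edge_shifts v)) (neighbours v)"
  proof (rule bij_betwI')
    fix y assume "y \<in> neighbours v"
    obtain z w where "w \<in> V" "y = act z w" by (rule fundamental_domain_cases)
    with \<open>y \<in> neighbours v\<close> show "\<exists>p\<in>Sigma V (edge_shifts v). y = (case p of (w, z) \<Rightarrow> act z w)"
      by (intro bexI[of _ "(w, z)"]) (auto simp: edge_shifts_def)
  qed (auto simp: edge_shifts_def dest: fundamental_domain_unique)
  then have "(\<Sum>y\<in>neighbours v. b v y * f y)
      = (\<Sum>p\<in>Sigma V (edge_shifts v). (\<lambda>y. b v y * f y) ((\<lambda>(w, z). act z w) p))"
    by (rule sum.reindex_bij_betw[symmetric])
  also have "\<dots> = (\<Sum>w\<in>V. \<Sum>z\<in>edge_shifts v w. b v (act z w) * f (act z w))"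
    by (subst sum.Sigma) (auto simp: finite_V finite_edge_shifts split_def)
  also have "\<dots> = (\<Sum>w\<in>V. (\<Sum>z\<in>edge_shifts v w. b v (act z w) * exp (\<alpha> \<bullet> zr z)) * f w)"
    using shift by (auto simp: sum_distrib_right intro!: sum.cong)
  finally show ?thesis .
qed

lemma Hop_on_V:
  assumes shift: "\<forall>z. \<forall>w\<in>V. f (act z w) = exp (\<alpha> \<bullet> zr z) * f w" and v: "v \<in> V"
  shows "Hop b c f v = max_deg * f v - (\<Sum>w\<in>V. Qmat b c act V \<alpha> v w * f w)"
proof -
  have "(\<Sum>w\<in>V. Qmat b c act V \<alpha> v w * f w)
      = (\<Sum>w\<in>V. (\<Sum>z\<in>edge_shifts v w. b v (act z w) * exp (\<alpha> \<bullet> zr z)) * f w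
          + (if w = v then (max_deg - deg b c v) * f w else 0))"
    by (rule sum.cong) (auto simp: Qmat_eq algebra_simps)
  also have "\<dots> = (\<Sum>y\<in>neighbours v. b v y * f y) + (max_deg - deg b c v) * f v"
    using v finite_V by (simp add: sum.distrib sum_neighbours_eq[OF shift])
  finally show ?thesis
    by (simp add: Hop_eq algebra_simps)
qed

lemma harmonic_iff_Qmat_eigenvector:
  assumes shift: "\<forall>z x. f (act z x) = exp (\<alpha> \<bullet> zr z) * f x"
  shows "harmonic b c lam f \<longleftrightarrow> (\<forall>v\<in>V. (\<Sum>w\<in>V. Qmat b c act V \<alpha> v w * f w) = (max_deg - lam) * f v)"
proof -
  have Hop_V: "Hop b c f v = max_deg * f v - (\<Sum>w\<in>V. Qmat b c act V \<alpha> v w * f w)" if "v \<in> V" for v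
    using Hop_on_V shift that by blast
  have "(\<forall>x. Hop b c f x = lam * f x) \<longleftrightarrow> (\<forall>v\<in>V. Hop b c f v = lam * f v)"
  proof (intro iffI ballI allI)
    fix x assume on_V: "\<forall>v\<in>V. Hop b c f v = lam * f v"
    obtain z v where "v \<in> V" "x = act z v" by (rule fundamental_domain_cases)
    with on_V show "Hop b c f x = lam * f x"
      using Hop_act_multiplicative[OF shift] shift by simp
  qed simp
  then show ?thesis
    by (auto simp: harmonic_def DomH_eq_UNIV Hop_V algebra_simps)
qed

text \<open>All the defining conditions are closed under pointwise convergence, so taking the closure in
  the definition of \<open>Kset\<close> adds nothing.\<close>
lemma mem_Kset_iff:
  "f \<in> Kset b c x0 lam \<longleftrightarrow> (\<forall>x. f x \<ge> 0) \<and> f x0 = 1 \<and> (\<forall>x. Hop b c f x = lam * f x)"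
proof -
  let ?S = "{f. (\<forall>x. f x \<ge> 0) \<and> f x0 = 1 \<and> (\<forall>x. Hop b c f x = lam * f x)}"
  have closed_nonneg: "closed {f :: 'x \<Rightarrow> real. f x \<ge> 0}" for x
    by (rule closed_Collect_le) (auto intro: continuous_on_const)
  have closed_normalised: "closed {f :: 'x \<Rightarrow> real. f x0 = 1}"
    by (rule closed_Collect_eq) (auto intro: continuous_on_const)
  have closed_eigen: "closed {f. Hop b c f x = lam * f x}" for x
    unfolding Hop_eq by (intro closed_Collect_eq continuous_intros continuous_on_product_coordinates)
  have "?S = (\<Inter>x. {f. f x \<ge> 0}) \<inter> {f. f x0 = 1} \<inter> (\<Inter>x. {f. Hop b c f x = lam * f x})"
    by blast
  also have "closed \<dots>"
    by (intro closed_Int closed_INT ballI closed_nonneg closed_normalised closed_eigen)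
  finally have "closed ?S" .
  moreover have "{f. (\<forall>x. f x \<ge> 0) \<and> f \<noteq> (\<lambda>_. 0) \<and> harmonic b c lam f \<and> f x0 = 1} = ?S"
    by (auto simp: harmonic_def DomH_eq_UNIV)
  ultimately have "Kset b c x0 lam = ?S"
    unfolding Kset_def by (simp add: closure_closed)
  then show ?thesis by simp
qed

lemma harmonic_if_mem_Kset: "f \<in> Kset b c x0 lam \<Longrightarrow> harmonic b c lam f"
  by (simp add: mem_Kset_iff harmonic_def DomH_eq_UNIV)

lemma Kset_pos:
  assumes "f \<in> Kset b c x0 lam"
  shows "f x > 0"
proof (rule ccontr)
  assume "\<not> f x > 0"
  have nonneg: "\<forall>x. f x \<ge> 0" and eig: "\<forall>x. Hop b c f x = lam * f x" and "f x0 = 1"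
    using assms by (simp_all add: mem_Kset_iff)
  have step: "f w = 0" if "b u w > 0" "f u = 0" for u w
  proof -
    have "Hop b c f u = 0"
      using eig that(2) by simp
    then have "(\<Sum>y\<in>neighbours u. b u y * f y) = 0"
      using that(2) by (simp add: Hop_eq)
    moreover have "\<forall>y\<in>neighbours u. 0 \<le> b u y * f y"
      using b_nonneg nonneg by simp
    ultimately have "\<forall>y\<in>neighbours u. b u y * f y = 0"
      using finite_neighbours by (simp add: sum_nonneg_eq_0_iff)
    then show ?thesis
      using that(1) by (simp add: neighbours_def)
  qed
  have "f x = 0"
    using nonneg \<open>\<not> f x > 0\<close> by (simp add: order.strict_iff_order)
  have "(\<lambda>u w. b u w > 0)\<^sup>*\<^sup>* x x0"
    using connected by (simp add: connected_graph_def)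
  then have "f x0 = 0"
    by (induction rule: rtranclp_induct) (use \<open>f x = 0\<close> step in auto)
  with \<open>f x0 = 1\<close> show False by simp
qed

lemma multiplicative_rho_eqI:
  assumes "f x0 = 1" and shift: "\<forall>z x. f (act z x) = exp (\<alpha> \<bullet> zr z) * f x"
  shows "multiplicative act f" "rho act f = \<alpha>"
proof -
  have char: "is_character act f (\<lambda>z. exp (\<alpha> \<bullet> zr z))"
    by (simp add: is_character_def exp_inner_zr_add shift)
  then show "multiplicative act f"
    by (auto simp: multiplicative_def)
  have "character act f = (\<lambda>z. exp (\<alpha> \<bullet> zr z))"
    unfolding character_def
  proof (rule the_equality)
    fix \<gamma> assume "is_character act f \<gamma>"
    then have "\<gamma> z = f (act z x0)" for z
      using \<open>f x0 = 1\<close> by (simp add: is_character_def)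
    then show "\<gamma> = (\<lambda>z. exp (\<alpha> \<bullet> zr z))"
      using shift \<open>f x0 = 1\<close> by auto
  qed (rule char)
  then show "rho act f = \<alpha>"
    unfolding rho_def
  proof (intro the_equality)
    fix \<beta> assume "\<forall>z. ln (character act f z) = \<beta> \<bullet> zr z"
    with \<open>character act f = _\<close> show "\<beta> = \<alpha>"
      by (intro inner_zr_eqD) simp
  qed simp
qed

lemma MR_shiftE:
  assumes "f \<in> MR b c act x0"
  obtains lam where "f \<in> Kset b c x0 lam" "\<forall>z x. f (act z x) = exp (rho act f \<bullet> zr z) * f x"
proof -
  obtain lam \<gamma> where K: "f \<in> Kset b c x0 lam" and \<gamma>: "is_character act f \<gamma>"
    using assms by (auto simp: MR_def Mset_def multiplicative_def)
  define \<alpha> :: "real ^ 'd" where "\<alpha> = (\<chi> i. ln (\<gamma> (axis i 1)))"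
  have "\<And>z. \<gamma> z > 0" "\<And>z w. \<gamma> (z + w) = \<gamma> z * \<gamma> w"
    using \<gamma> by (simp_all add: is_character_def)
  then have \<gamma>_eq: "\<gamma> z = exp (\<alpha> \<bullet> zr z)" for z
    unfolding \<alpha>_def by (rule positive_character_eq_exp)
  have shift: "\<forall>z x. f (act z x) = exp (\<alpha> \<bullet> zr z) * f x"
    using \<gamma> by (simp add: is_character_def \<gamma>_eq)
  moreover have "f x0 = 1"
    using K by (simp add: mem_Kset_iff)
  ultimately have "rho act f = \<alpha>"
    by (intro multiplicative_rho_eqI)
  with K shift show ?thesis
    by (intro that) simp_all
qed

lemma mult_fun_mem_Mset:
  assumes PF: "PF_eigenvector V (Qmat b c act V \<alpha>) \<phi>" and norm: "mult_fun act V \<alpha> \<phi> x0 = 1"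
  shows "mult_fun act V \<alpha> \<phi> \<in> Mset b c act x0 (max_deg - PF_eigenvalue V (Qmat b c act V \<alpha>))"
    and "rho act (mult_fun act V \<alpha> \<phi>) = \<alpha>"
proof -
  define f where "f = mult_fun act V \<alpha> \<phi>"
  define \<theta> where "\<theta> = PF_eigenvalue V (Qmat b c act V \<alpha>)"
  have shift: "\<forall>z x. f (act z x) = exp (\<alpha> \<bullet> zr z) * f x"
    by (simp add: f_def mult_fun_act_shift)
  have pos: "\<forall>v\<in>V. \<phi> v > 0" and eig: "\<forall>v\<in>V. (\<Sum>w\<in>V. Qmat b c act V \<alpha> v w * \<phi> w) = \<theta> * \<phi> v"
    using PF by (simp_all add: PF_eigenvector_def \<theta>_def)
  have "(\<Sum>w\<in>V. Qmat b c act V \<alpha> v w * f w) = (max_deg - (max_deg - \<theta>)) * f v" if "v \<in> V" for v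
  proof -
    have "(\<Sum>w\<in>V. Qmat b c act V \<alpha> v w * f w) = (\<Sum>w\<in>V. Qmat b c act V \<alpha> v w * \<phi> w)"
      by (rule sum.cong) (simp_all add: f_def mult_fun_on_V)
    then show ?thesis
      using eig that by (simp add: f_def mult_fun_on_V)
  qed
  then have "harmonic b c (max_deg - \<theta>) f"
    using harmonic_iff_Qmat_eigenvector[OF shift] by blast
  moreover have "\<forall>x. f x \<ge> 0"
    using pos by (simp add: f_def mult_fun_pos less_imp_le)
  ultimately have "f \<in> Kset b c x0 (max_deg - \<theta>)"
    using norm by (simp add: mem_Kset_iff harmonic_def f_def)
  then show "mult_fun act V \<alpha> \<phi> \<in> Mset b c act x0 (max_deg - \<theta>)"
    using multiplicative_rho_eqI(1)[OF _ shift] norm by (simp add: Mset_def f_def)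
  show "rho act (mult_fun act V \<alpha> \<phi>) = \<alpha>"
    using multiplicative_rho_eqI(2)[OF _ shift] norm by (simp add: f_def)
qed

lemma normalised_PF_eigenvector_exists:
  "\<exists>\<phi>. PF_eigenvector V (Qmat b c act V \<alpha>) \<phi> \<and> mult_fun act V \<alpha> \<phi> x0 = 1"
proof -
  interpret irreducible_matrix V "Qmat b c act V \<alpha>"
    by (rule irreducible_matrix_Qmat)
  obtain \<phi> r where pos: "\<forall>v\<in>V. \<phi> v > 0" and eig: "\<forall>v\<in>V. (\<Sum>w\<in>V. Qmat b c act V \<alpha> v w * \<phi> w) = r * \<phi> v"
    by (rule positive_eigenvector_exists)
  define s where "s = mult_fun act V \<alpha> \<phi> x0"
  have "s > 0"
    using pos by (simp add: s_def mult_fun_pos)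
  have "PF_eigenvector V (Qmat b c act V \<alpha>) (\<lambda>v. \<phi> v / s)"
    unfolding PF_eigenvector_def PF_eigenvalue_eqI[OF pos eig]
    using pos eig \<open>s > 0\<close> by (simp add: sum_divide_distrib[symmetric])
  moreover have "mult_fun act V \<alpha> (\<lambda>v. \<phi> v / s) x0 = 1"
    using \<open>s > 0\<close> by (simp add: mult_fun_divide s_def)
  ultimately show ?thesis by blast
qed

text \<open>Two elements of \<open>\<M>\<^sub>\<real>\<close> with the same \<open>\<rho>\<close> restrict on \<open>V\<close> to positive eigenvectors of the
  same \<open>Q\<^sub>\<alpha>\<close>; both eigenvalues are therefore the Perron--Frobenius eigenvalue, and the eigenvectors are
  proportional.\<close>
lemma inj_on_rho_MR: "inj_on (rho act) (MR b c act x0)"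
proof (rule inj_onI)
  fix f g assume f: "f \<in> MR b c act x0" and g: "g \<in> MR b c act x0" and fg: "rho act f = rho act g"
  let ?Q = "Qmat b c act V (rho act f)"
  interpret irreducible_matrix V ?Q
    by (rule irreducible_matrix_Qmat)
  obtain lf where fK: "f \<in> Kset b c x0 lf" and f_shift: "\<forall>z x. f (act z x) = exp (rho act f \<bullet> zr z) * f x"
    using f by (rule MR_shiftE)
  obtain lg where gK: "g \<in> Kset b c x0 lg" and "\<forall>z x. g (act z x) = exp (rho act g \<bullet> zr z) * g x"
    using g by (rule MR_shiftE)
  with fg have g_shift: "\<forall>z x. g (act z x) = exp (rho act f \<bullet> zr z) * g x" by simp
  have pos_f: "\<forall>v\<in>V. f v > 0" and pos_g: "\<forall>v\<in>V. g v > 0"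
    using Kset_pos[OF fK] Kset_pos[OF gK] by blast+
  have eig_f: "\<forall>v\<in>V. (\<Sum>w\<in>V. ?Q v w * f w) = (max_deg - lf) * f v"
    using harmonic_if_mem_Kset[OF fK] harmonic_iff_Qmat_eigenvector[OF f_shift] by blast
  have eig_g: "\<forall>v\<in>V. (\<Sum>w\<in>V. ?Q v w * g w) = (max_deg - lg) * g v"
    using harmonic_if_mem_Kset[OF gK] harmonic_iff_Qmat_eigenvector[OF g_shift] by blast
  have "max_deg - lg = max_deg - lf"
    using PF_eigenvalue_eqI[OF pos_f eig_f] PF_eigenvalue_eqI[OF pos_g eig_g] by simp
  with eig_g have "\<forall>v\<in>V. (\<Sum>w\<in>V. ?Q v w * g w) = (max_deg - lf) * g v" by simp
  then obtain t where t: "\<forall>v\<in>V. f v = t * g v"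
    using positive_eigenvectors_proportional[OF pos_f eig_f pos_g] by blast
  have f_eq: "f x = t * g x" for x
  proof -
    obtain z v where "v \<in> V" "x = act z v" by (rule fundamental_domain_cases)
    with f_shift g_shift t show ?thesis by simp
  qed
  moreover have "f x0 = 1" "g x0 = 1"
    using fK gK by (simp_all add: mem_Kset_iff)
  ultimately have "t = 1"
    by (metis mult.right_neutral)
  with f_eq show "f = g" by auto
qed

lemma rho_image_MR: "rho act ` MR b c act x0 = UNIV"
proof -
  have "\<alpha> \<in> rho act ` MR b c act x0" for \<alpha>
  proof -
    obtain \<phi> where "PF_eigenvector V (Qmat b c act V \<alpha>) \<phi>" "mult_fun act V \<alpha> \<phi> x0 = 1"
      using normalised_PF_eigenvector_exists by blast
    from mult_fun_mem_Mset[OF this] show ?thesis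
      by (intro image_eqI[where x = "mult_fun act V \<alpha> \<phi>"]) (auto simp: MR_def)
  qed
  then show ?thesis by blast
qed

end

theorem lemma12:
  fixes b :: "'x::countable \<Rightarrow> 'x \<Rightarrow> real" and c :: "'x \<Rightarrow> real"
    and act :: "int ^ 'd::finite \<Rightarrow> 'x \<Rightarrow> 'x" and V :: "'x set" and x0 :: 'x
  assumes "is_graph b" and "locally_finite b" and "connected_graph b"
    and "is_action act" and "free_action act"
    and "finite V" and "fundamental_domain act V"
    and "H_invariant b c act"
  shows "bij_betw (rho act) (MR b c act x0) UNIV
    \<and> (\<forall>\<alpha>. (\<exists>\<phi>. PF_eigenvector V (Qmat b c act V \<alpha>) \<phi> \<and> mult_fun act V \<alpha> \<phi> x0 = 1)
         \<and> (\<forall>\<phi>. PF_eigenvector V (Qmat b c act V \<alpha>) \<phi> \<and> mult_fun act V \<alpha> \<phi> x0 = 1 \<longrightarrow>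
               inv_into (MR b c act x0) (rho act) \<alpha> = mult_fun act V \<alpha> \<phi>
             \<and> mult_fun act V \<alpha> \<phi> \<in> Mset b c act x0
                  (Max (deg b c ` V) - PF_eigenvalue V (Qmat b c act V \<alpha>))))"
proof -
  \<comment> \<open>Freeness of the action is implied by the fundamental domain (\<open>inj_orbit_map\<close>).\<close>
  interpret periodic_graph b c act V x0
    using assms(1-4,6-8) by unfold_locales
  have "bij_betw (rho act) (MR b c act x0) UNIV"
    using inj_on_rho_MR rho_image_MR by (simp add: bij_betw_def)
  moreover have "inv_into (MR b c act x0) (rho act) \<alpha> = mult_fun act V \<alpha> \<phi>"
    if "PF_eigenvector V (Qmat b c act V \<alpha>) \<phi>" "mult_fun act V \<alpha> \<phi> x0 = 1" for \<alpha> \<phi>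
    using mult_fun_mem_Mset[OF that] by (intro inv_into_f_eq[OF inj_on_rho_MR]) (auto simp: MR_def)
  ultimately show ?thesis
    using normalised_PF_eigenvector_exists mult_fun_mem_Mset by blast
qed

end
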